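(* Assume a single budget constraint with costs $c_I>0$ for all $I\in\mathcal I$, $\Sigma$ symmetric positive definite, $a\neq0$ with $\operatorname{supp}(a)\subseteq\bigcup\mathcal I$. Let $\underline\nu^*\in\mathbb{R}^{\mathcal I}_{\ge0}$ minimize $V_1$ over real allocations with budget $1$, and for $B>0$ let $\underline n_{\mathrm{round}}=\lfloor B\underline\nu^*\rfloor$ (componentwise floor), let $\underline n^*_{\mathrm{frac}}$ minimize $V_B$ over real feasible allocations and $\underline n^*_{\mathrm{int}}$ minimize $V_B$ over integer feasible allocations. Then $\lim_{B\to\infty}B\,V_B(\underline n_{\mathrm{round}})=V_1(\underline\nu^* )=B\,V_B(\underline n^*_{\mathrm{frac}})$, and consequently \[ \lim_{B\to\infty}\frac{V_B(\underline n^*_{\mathrm{frac}})}{V_B(\underline n^*_{\mathrm{int}})}=1 . \]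
   Context: $\mathcal I$ is a collection of nonempty subsets of $\{1,\dots,k\}$; $P_I:\mathbb{R}^k\to\mathbb{R}^{|I|}$ the coordinate projection onto $I$; $\Sigma_I=P_I\Sigma P_I^\top$. For $\underline n\in\mathbb{R}^{\mathcal I}_{\ge0}$, $V_B(\underline n)=a^\top\big(\sum_In_IP_I^\top\Sigma_I^{-1}P_I\big)^\dagger a$ ($\dagger$ = Moore–Penrose pseudo-inverse); $\underline n$ is feasible for budget $B$ if $n_I\ge0$, $\sum_Ic_In_I\le B$, and $\operatorname{supp}(a)\subseteq\bigcup\{I:n_I>0\}$. *)

theory Defs
  imports "HOL-Analysis.Analysis"
begin

text \<open>Index set {1..k} is modelled by a finite type 'n; matrices are real^'n^'n.\<close>

definition mp_pinv :: "real^'n^'n \<Rightarrow> real^'n^'n" where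
  "mp_pinv A = (THE X. A ** X ** A = A \<and> X ** A ** X = X \<and>
      transpose (A ** X) = A ** X \<and> transpose (X ** A) = X ** A)"

text \<open>The k x k matrix P_I^T (Sigma_I)^{-1} P_I: it vanishes outside I x I, and its
  I x I block is the inverse of the principal submatrix Sigma_I = P_I Sigma P_I^T.\<close>
definition embed_sub_inv :: "real^'n^'n \<Rightarrow> 'n set \<Rightarrow> real^'n^'n" where
  "embed_sub_inv S I = (THE X. (\<forall>i j. (i \<notin> I \<or> j \<notin> I) \<longrightarrow> X $ i $ j = 0) \<and>
      (\<forall>i\<in>I. \<forall>j\<in>I. (\<Sum>l\<in>I. S $ i $ l * X $ l $ j) = (if i = j then 1 else 0)))"

text \<open>Variance functional V_B(n) = a^T (sum_I n_I P_I^T Sigma_I^{-1} P_I)^+ a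
  (it does not depend on B).\<close>
definition Var :: "'n set set \<Rightarrow> real^'n^'n \<Rightarrow> real^'n \<Rightarrow> ('n set \<Rightarrow> real) \<Rightarrow> real" where
  "Var \<I> S a n = a \<bullet> (mp_pinv (\<Sum>I\<in>\<I>. n I *\<^sub>R embed_sub_inv S I) *v a)"

definition feasible :: "'n set set \<Rightarrow> ('n set \<Rightarrow> real) \<Rightarrow> real^'n \<Rightarrow> real \<Rightarrow> ('n set \<Rightarrow> real) \<Rightarrow> bool" where
  "feasible \<I> c a B n \<longleftrightarrow> (\<forall>I\<in>\<I>. n I \<ge> 0) \<and> (\<Sum>I\<in>\<I>. c I * n I) \<le> B \<and>
      {i. a $ i \<noteq> 0} \<subseteq> \<Union>{I\<in>\<I>. n I > 0}"

definition integral_alloc :: "'n set set \<Rightarrow> ('n set \<Rightarrow> real) \<Rightarrow> bool" where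
  "integral_alloc \<I> n \<longleftrightarrow> (\<forall>I\<in>\<I>. n I \<in> \<int>)"

end

theory Submission
  imports Defs "HOL-Real_Asymp.Real_Asymp"
begin

text \<open>For a nonnegative allocation \<open>n\<close> the information matrix
  \<open>M(n) = \<Sum>\<^sub>I n\<^sub>I P\<^sub>I\<^sup>T \<Sigma>\<^sub>I\<^sup>-\<^sup>1 P\<^sub>I\<close> vanishes outside the set \<open>U\<close> of covered coordinates and is
  positive definite on vectors supported in \<open>U\<close>. Hence its pseudo-inverse is its inverse on \<open>U\<close>,
  and for admissible \<open>n\<close> one gets \<open>V(n) = max\<^sub>x (2 a\<cdot>x - x\<cdot>M(n) x)\<close>. As \<open>M\<close> is linear
  and monotone in \<open>n\<close>, this gives \<open>V(t n) = V(n) / t\<close> and \<open>V(n) \<le> V(m) / c\<close> whenever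
  \<open>n \<ge> c m\<close>. So the fractional optimum at budget \<open>B\<close> is \<open>V\<^sub>1(\<nu>\<^sup>*) / B\<close>, and
  \<open>(B - K) \<nu>\<^sup>* \<le> \<lfloor>B \<nu>\<^sup>*\<rfloor> \<le> B \<nu>\<^sup>*\<close> for a constant \<open>K\<close> squeezes \<open>B V(\<lfloor>B \<nu>\<^sup>*\<rfloor>)\<close> between
  \<open>V\<^sub>1(\<nu>\<^sup>*)\<close> and \<open>B V\<^sub>1(\<nu>\<^sup>*) / (B - K)\<close>. Since \<open>\<lfloor>B \<nu>\<^sup>*\<rfloor>\<close> is an integral feasible allocation,
  \<open>V(n\<^sub>f\<^sub>r\<^sub>a\<^sub>c) \<le> V(n\<^sub>i\<^sub>n\<^sub>t) \<le> V(\<lfloor>B \<nu>\<^sup>*\<rfloor>)\<close>, which yields the limit of the ratio.\<close>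

definition supported_on :: "'n set \<Rightarrow> real^'n \<Rightarrow> bool" where
  "supported_on U x \<longleftrightarrow> (\<forall>i. i \<notin> U \<longrightarrow> x $ i = 0)"

definition pos_def_on :: "real^'n^'n \<Rightarrow> 'n set \<Rightarrow> bool" where
  "pos_def_on M U \<longleftrightarrow> (\<forall>x. x \<noteq> 0 \<longrightarrow> supported_on U x \<longrightarrow> 0 < x \<bullet> (M *v x))"

definition block_inverse :: "real^'n^'n \<Rightarrow> 'n set \<Rightarrow> real^'n^'n \<Rightarrow> bool" where
  "block_inverse M U X \<longleftrightarrow> (\<forall>i j. i \<notin> U \<or> j \<notin> U \<longrightarrow> X $ i $ j = 0) \<and>
      (\<forall>i\<in>U. \<forall>j\<in>U. (\<Sum>l\<in>U. M $ i $ l * X $ l $ j) = (if i = j then 1 else 0))"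

definition penrose_inverse :: "real^'n^'n \<Rightarrow> real^'n^'n \<Rightarrow> bool" where
  "penrose_inverse A X \<longleftrightarrow> A ** X ** A = A \<and> X ** A ** X = X \<and>
      transpose (A ** X) = A ** X \<and> transpose (X ** A) = X ** A"

lemma inner_supported_cong:
  assumes "supported_on U x" and "\<And>i. i \<in> U \<Longrightarrow> y $ i = z $ i"
  shows "x \<bullet> y = x \<bullet> z"
  using assms unfolding supported_on_def inner_vec_def by (intro sum.cong) auto

lemma matrix_vector_mult_supported:
  assumes "supported_on U x"
  shows "(M *v x) $ i = (\<Sum>l\<in>U. M $ i $ l * x $ l)"
  using assms unfolding supported_on_def matrix_vector_mult_def
  by (auto intro: sum.mono_neutral_cong_right)

lemma symmetric_matrix_inner:
  fixes M :: "real^'n^'n"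
  assumes "transpose M = M"
  shows "x \<bullet> (M *v y) = (M *v x) \<bullet> y"
  by (metis assms dot_lmul_matrix transpose_matrix_vector)

subsection \<open>Inverses of principal blocks\<close>

lemma block_inverse_zero: "block_inverse M U X \<Longrightarrow> i \<notin> U \<or> j \<notin> U \<Longrightarrow> X $ i $ j = 0"
  unfolding block_inverse_def by blast

lemma block_inverse_row:
  assumes "block_inverse M U X" and "i \<in> U"
  shows "(\<Sum>l\<in>U. M $ i $ l * X $ l $ j) = (if i = j then 1 else 0)"
proof (cases "j \<in> U")
  case True
  then show ?thesis using assms unfolding block_inverse_def by blast
next
  case False
  then show ?thesis using assms block_inverse_zero[OF assms(1)] by auto
qed

lemma block_inverse_supported: "block_inverse M U X \<Longrightarrow> supported_on U (X *v x)"
  unfolding supported_on_def by (simp add: block_inverse_zero matrix_vector_mult_def)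

lemma block_inverse_right_inverse:
  assumes "block_inverse M U X" and "i \<in> U"
  shows "(M *v (X *v x)) $ i = x $ i"
proof -
  have "(M *v (X *v x)) $ i = (\<Sum>l\<in>U. M $ i $ l * (X *v x) $ l)"
    by (rule matrix_vector_mult_supported[OF block_inverse_supported[OF assms(1)]])
  also have "\<dots> = (\<Sum>l\<in>U. M $ i $ l * (\<Sum>j\<in>UNIV. X $ l $ j * x $ j))"
    by (simp add: matrix_vector_mult_def)
  also have "\<dots> = (\<Sum>j\<in>UNIV. (\<Sum>l\<in>U. M $ i $ l * X $ l $ j) * x $ j)"
    by (simp add: sum_distrib_left sum_distrib_right sum.swap[of _ U] ac_simps)
  also have "\<dots> = (\<Sum>j\<in>UNIV. if j = i then x $ j else 0)"
    by (intro sum.cong) (auto simp: block_inverse_row[OF assms])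
  also have "\<dots> = x $ i" by simp
  finally show ?thesis .
qed

text \<open>The rows of \<open>M\<close> indexed by \<open>U\<close>, completed by unit rows outside \<open>U\<close>, form an injective
  and hence surjective linear map; the preimages of the unit vectors \<open>e\<^sub>j\<close>, \<open>j \<in> U\<close>, are
  supported in \<open>U\<close> and are the columns of the block inverse.\<close>
lemma block_inverse_exists:
  fixes M :: "real^'n^'n"
  assumes pd: "pos_def_on M U"
  shows "\<exists>X. block_inverse M U X"
proof -
  define f where "f x = (\<chi> i. if i \<in> U then (M *v x) $ i else x $ i)" for x :: "real^'n"
  have lin: "linear f"
    unfolding f_def by (intro linearI) (auto simp: vec_eq_iff algebra_simps)
  have "inj f"
  proof (rule linear_injective_0[THEN iffD2, OF lin], intro allI impI)
    fix x assume "f x = 0"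
    then have "f x $ i = 0" for i by simp
    then have fx: "(if i \<in> U then (M *v x) $ i else x $ i) = 0" for i
      unfolding f_def by simp
    then have xs: "supported_on U x" unfolding supported_on_def by metis
    have "x \<bullet> (M *v x) = x \<bullet> 0"
      by (rule inner_supported_cong[OF xs]) (metis fx zero_index)
    then show "x = 0" using pd xs unfolding pos_def_on_def by force
  qed
  then have "surj f" using linear_injective_imp_surjective[OF lin] by simp
  define g where "g j = inv f (axis j 1)" for j
  have fg: "f (g j) = axis j 1" for j
    unfolding g_def using \<open>surj f\<close> by (simp add: surj_f_inv_f)
  have gs: "supported_on U (g j)" if "j \<in> U" for j
    unfolding supported_on_def
  proof (intro allI impI)
    fix i assume "i \<notin> U"
    then show "g j $ i = 0"
      using fg[of j] that by (auto simp: f_def axis_def vec_eq_iff split: if_splits)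
  qed
  define X where "X = (\<chi> i j. if i \<in> U \<and> j \<in> U then g j $ i else 0)"
  have "block_inverse M U X"
    unfolding block_inverse_def
  proof (intro conjI ballI allI impI)
    fix i j assume "i \<notin> U \<or> j \<notin> U"
    then show "X $ i $ j = 0" by (auto simp: X_def)
  next
    fix i j assume i: "i \<in> U" and j: "j \<in> U"
    have "(\<Sum>l\<in>U. M $ i $ l * X $ l $ j) = (M *v g j) $ i"
      using j by (simp add: matrix_vector_mult_supported[OF gs[OF j]] X_def)
    also have "\<dots> = axis j 1 $ i" using i by (simp flip: fg add: f_def)
    finally show "(\<Sum>l\<in>U. M $ i $ l * X $ l $ j) = (if i = j then 1 else 0)"
      by (simp add: axis_def)
  qed
  then show ?thesis by blast
qed

lemma block_inverse_unique:
  assumes pd: "pos_def_on M U" and X: "block_inverse M U X" and Y: "block_inverse M U Y"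
  shows "X = Y"
proof (unfold matrix_eq, rule allI)
  fix x
  define z where "z = X *v x - Y *v x"
  have zs: "supported_on U z"
    using block_inverse_supported[OF X] block_inverse_supported[OF Y]
    unfolding z_def supported_on_def by simp
  have "z \<bullet> (M *v z) = z \<bullet> 0"
    by (rule inner_supported_cong[OF zs])
      (simp add: z_def matrix_vector_mult_diff_distrib
        block_inverse_right_inverse[OF X] block_inverse_right_inverse[OF Y])
  then have "z = 0" using pd zs unfolding pos_def_on_def by force
  then show "X *v x = Y *v x" by (simp add: z_def)
qed

lemma block_inverse_symmetric:
  fixes M :: "real^'n^'n"
  assumes sym: "transpose M = M" and X: "block_inverse M U X"
  shows "transpose X = X"
proof -
  have "(X *v z) \<bullet> x = (X *v x) \<bullet> z" for x z
  proof -
    have "(X *v z) \<bullet> x = (X *v z) \<bullet> (M *v (X *v x))"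
      by (rule inner_supported_cong[OF block_inverse_supported[OF X]])
        (simp add: block_inverse_right_inverse[OF X])
    also have "\<dots> = (X *v x) \<bullet> (M *v (X *v z))"
      by (metis symmetric_matrix_inner[OF sym] inner_commute)
    also have "\<dots> = (X *v x) \<bullet> z"
      by (rule inner_supported_cong[OF block_inverse_supported[OF X]])
        (simp add: block_inverse_right_inverse[OF X])
    finally show ?thesis .
  qed
  then have "X *v z = transpose X *v z" for z
    by (metis vector_eq_rdot dot_lmul_matrix inner_commute transpose_matrix_vector)
  then show ?thesis by (metis matrix_eq)
qed

lemma block_inverse_quadratic_form:
  assumes "block_inverse M U X"
  shows "x \<bullet> (X *v x) = (X *v x) \<bullet> (M *v (X *v x))"
proof -
  have "(X *v x) \<bullet> (M *v (X *v x)) = (X *v x) \<bullet> x"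
    by (rule inner_supported_cong[OF block_inverse_supported[OF assms]])
      (simp add: block_inverse_right_inverse[OF assms])
  then show ?thesis by (simp add: inner_commute)
qed

lemma block_inverse_nonneg:
  assumes "pos_def_on M U" and "block_inverse M U X"
  shows "0 \<le> x \<bullet> (X *v x)"
  using assms block_inverse_supported[OF assms(2)]
  unfolding block_inverse_quadratic_form[OF assms(2)] pos_def_on_def
  by (cases "X *v x = 0") (auto intro: less_imp_le)

lemma block_inverse_pos:
  assumes "pos_def_on M U" and "block_inverse M U X" and "i \<in> U" and "x $ i \<noteq> 0"
  shows "0 < x \<bullet> (X *v x)"
proof -
  have "X *v x \<noteq> 0"
    using block_inverse_right_inverse[OF assms(2,3), of x] assms(4) by auto
  then show ?thesis
    using assms block_inverse_supported[OF assms(2)]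
    unfolding block_inverse_quadratic_form[OF assms(2)] pos_def_on_def by blast
qed

lemma block_inverse_embed_sub_inv:
  assumes "pos_def_on S I"
  shows "block_inverse S I (embed_sub_inv S I)"
proof -
  have "embed_sub_inv S I = (THE X. block_inverse S I X)"
    by (simp add: embed_sub_inv_def block_inverse_def)
  then show ?thesis
    using block_inverse_exists[OF assms] block_inverse_unique[OF assms] by (metis theI)
qed

subsection \<open>The Moore--Penrose inverse\<close>

lemma penrose_inverse_unique:
  assumes X: "penrose_inverse A X" and Y: "penrose_inverse A Y"
  shows "X = Y"
proof -
  note x = X[unfolded penrose_inverse_def] and y = Y[unfolded penrose_inverse_def]
  have AX: "A ** X = A ** Y"
  proof -
    have "A ** X = transpose ((A ** Y) ** (A ** X))"
      by (metis x y matrix_mul_assoc)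
    also have "\<dots> = (A ** X) ** (A ** Y)"
      by (metis x y matrix_transpose_mul)
    also have "\<dots> = A ** Y" by (metis x matrix_mul_assoc)
    finally show ?thesis .
  qed
  have XA: "X ** A = Y ** A"
  proof -
    have "X ** A = transpose ((X ** A) ** (Y ** A))"
      by (metis x y matrix_mul_assoc)
    also have "\<dots> = (Y ** A) ** (X ** A)"
      by (metis x y matrix_transpose_mul)
    also have "\<dots> = Y ** A" by (metis y x matrix_mul_assoc)
    finally show ?thesis .
  qed
  have "X = X ** (A ** X)" by (metis x matrix_mul_assoc)
  also have "\<dots> = (Y ** A) ** Y" by (metis AX XA matrix_mul_assoc)
  also have "\<dots> = Y" by (metis y)
  finally show ?thesis .
qed

lemma mp_pinv_eqI: "penrose_inverse A X \<Longrightarrow> mp_pinv A = X"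
  unfolding mp_pinv_def
  by (rule the_equality) (use penrose_inverse_unique in \<open>auto simp: penrose_inverse_def\<close>)

text \<open>Both \<open>M X\<close> and \<open>X M\<close> equal the coordinate projection onto \<open>U\<close>.\<close>
lemma penrose_inverse_block_inverse:
  fixes M :: "real^'n^'n"
  assumes sym: "transpose M = M" and M0: "\<And>i j. i \<notin> U \<or> j \<notin> U \<Longrightarrow> M $ i $ j = 0"
    and X: "block_inverse M U X"
  shows "penrose_inverse M X"
proof -
  define D where "D = (\<chi> i j. if i = j \<and> i \<in> U then 1 else (0::real))"
  have D_mult: "D ** A = A" if "\<And>i j. i \<notin> U \<Longrightarrow> A $ i $ j = 0" for A :: "real^'n^'n"
  proof -
    have "(\<Sum>k\<in>UNIV. D $ i $ k * A $ k $ j) =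
        (\<Sum>k\<in>UNIV. if k = i then (if i \<in> U then A $ i $ j else 0) else 0)" for i j
      by (intro sum.cong) (auto simp: D_def)
    then show ?thesis using that by (simp add: matrix_matrix_mult_def vec_eq_iff)
  qed
  have MX: "M ** X = D"
  proof -
    have "(\<Sum>l\<in>UNIV. M $ i $ l * X $ l $ j) = D $ i $ j" for i j
    proof (cases "i \<in> U")
      case False
      then show ?thesis using M0 by (simp add: D_def)
    next
      case True
      have "(\<Sum>l\<in>UNIV. M $ i $ l * X $ l $ j) = (\<Sum>l\<in>U. M $ i $ l * X $ l $ j)"
        using block_inverse_zero[OF X] by (intro sum.mono_neutral_cong_right) auto
      then show ?thesis using block_inverse_row[OF X True] True by (simp add: D_def)
    qed
    then show ?thesis by (simp add: matrix_matrix_mult_def vec_eq_iff)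
  qed
  have D_sym: "transpose D = D" by (auto simp: D_def transpose_def vec_eq_iff)
  have XM: "X ** M = D"
    by (metis MX D_sym sym block_inverse_symmetric[OF sym X] matrix_transpose_mul)
  have "D ** M = M" "D ** X = X"
    using M0 block_inverse_zero[OF X] by (auto intro: D_mult)
  then show ?thesis
    unfolding penrose_inverse_def by (simp add: MX XM D_sym flip: matrix_mul_assoc)
qed

subsection \<open>Allocations and the information matrix\<close>

definition alloc_support :: "'n set set \<Rightarrow> ('n set \<Rightarrow> real) \<Rightarrow> 'n set" where
  "alloc_support \<I> n = \<Union>{I\<in>\<I>. 0 < n I}"

definition admissible :: "'n set set \<Rightarrow> real^'n \<Rightarrow> ('n set \<Rightarrow> real) \<Rightarrow> bool" where
  "admissible \<I> a n \<longleftrightarrow> (\<forall>I\<in>\<I>. 0 \<le> n I) \<and> {i. a $ i \<noteq> 0} \<subseteq> alloc_support \<I> n"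

definition info_matrix :: "'n set set \<Rightarrow> real^'n^'n \<Rightarrow> ('n set \<Rightarrow> real) \<Rightarrow> real^'n^'n" where
  "info_matrix \<I> S n = (\<Sum>I\<in>\<I>. n I *\<^sub>R embed_sub_inv S I)"

lemma Var_info_matrix: "Var \<I> S a n = a \<bullet> (mp_pinv (info_matrix \<I> S n) *v a)"
  by (simp add: Var_def info_matrix_def)

lemma info_matrix_entry: "info_matrix \<I> S n $ i $ j = (\<Sum>I\<in>\<I>. n I * embed_sub_inv S I $ i $ j)"
  by (simp add: info_matrix_def)

lemma info_matrix_quadratic_form:
  fixes \<I> :: "'n::finite set set"
  shows "x \<bullet> (info_matrix \<I> S n *v x) = (\<Sum>I\<in>\<I>. n I * (x \<bullet> (embed_sub_inv S I *v x)))"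
proof -
  have "(\<Sum>I\<in>F. f I) *v x = (\<Sum>I\<in>F. f I *v x)" if "finite F" for F and f :: "'n set \<Rightarrow> real^'n^'n"
    using that by (induction F rule: finite_induct) (auto simp: matrix_vector_mult_add_rdistrib)
  then show ?thesis
    by (simp add: info_matrix_def inner_sum_right scaleR_matrix_vector_assoc[symmetric])
qed

lemma admissible_mono:
  assumes "admissible \<I> a m" and "0 < c" and "\<forall>I\<in>\<I>. c * m I \<le> n I"
  shows "admissible \<I> a n"
proof -
  have "0 \<le> n I" and "0 < m I \<Longrightarrow> 0 < n I" if "I \<in> \<I>" for I
    using assms that unfolding admissible_def
    by (smt (verit, best) mult_pos_pos mult_nonneg_nonneg)+
  then show ?thesis using assms(1) unfolding admissible_def alloc_support_def by blast
qed

lemma feasible_imp_admissible: "feasible \<I> c a B n \<Longrightarrow> admissible \<I> a n"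
  unfolding feasible_def admissible_def alloc_support_def by blast

lemma feasible_scale:
  assumes "feasible \<I> c a B n" and "0 < t"
  shows "feasible \<I> c a (t * B) (\<lambda>I. t * n I)"
proof -
  have "{I\<in>\<I>. 0 < t * n I} = {I\<in>\<I>. 0 < n I}" using assms(2) by (simp add: zero_less_mult_iff)
  moreover have "(\<Sum>I\<in>\<I>. c I * (t * n I)) = t * (\<Sum>I\<in>\<I>. c I * n I)"
    by (simp add: sum_distrib_left ac_simps)
  ultimately show ?thesis using assms unfolding feasible_def by auto
qed

lemma feasible_floor:
  fixes \<I> :: "'n::finite set set"
  assumes "\<forall>I\<in>\<I>. 0 \<le> c I" and "feasible \<I> c a 1 \<nu>" and "0 \<le> B"
    and "admissible \<I> a (\<lambda>I. of_int \<lfloor>B * \<nu> I\<rfloor>)"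
  shows "feasible \<I> c a B (\<lambda>I. of_int \<lfloor>B * \<nu> I\<rfloor>)"
proof -
  have "(\<Sum>I\<in>\<I>. c I * of_int \<lfloor>B * \<nu> I\<rfloor>) \<le> (\<Sum>I\<in>\<I>. c I * (B * \<nu> I))"
    using assms(1) by (intro sum_mono mult_left_mono) auto
  also have "\<dots> = B * (\<Sum>I\<in>\<I>. c I * \<nu> I)" by (simp add: sum_distrib_left ac_simps)
  also have "\<dots> \<le> B" using assms(2,3) unfolding feasible_def by (simp add: mult_left_le)
  finally show ?thesis using assms(4) unfolding feasible_def admissible_def alloc_support_def
    by blast
qed

lemma floor_scaled_ge:
  fixes \<nu> :: "'a \<Rightarrow> real"
  assumes "finite F" and "\<forall>I\<in>F. 0 \<le> \<nu> I"
  obtains K where "0 < K" and "\<And>B I. I \<in> F \<Longrightarrow> (B - K) * \<nu> I \<le> of_int \<lfloor>B * \<nu> I\<rfloor>"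
proof
  define K where "K = Max (insert 1 ((\<lambda>I. 1 / \<nu> I) ` F))"
  have "1 \<le> K" unfolding K_def using assms(1) by (simp add: Max_ge_iff)
  then show "0 < K" by simp
  fix B I assume I: "I \<in> F"
  show "(B - K) * \<nu> I \<le> of_int \<lfloor>B * \<nu> I\<rfloor>"
  proof (cases "\<nu> I = 0")
    case False
    then have "0 < \<nu> I" using assms(2) I by force
    moreover have "1 / \<nu> I \<le> K" unfolding K_def using assms(1) I by (simp add: Max_ge_iff)
    ultimately have "1 \<le> K * \<nu> I" by (simp add: divide_le_eq)
    moreover have "B * \<nu> I - 1 < of_int \<lfloor>B * \<nu> I\<rfloor>" by linarith
    ultimately show ?thesis unfolding left_diff_distrib by linarith
  qed simp
qed

lemma eventually_feasible_floor:
  fixes \<I> :: "'n::finite set set"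
  assumes "\<forall>I\<in>\<I>. 0 \<le> c I" and \<nu>: "feasible \<I> c a 1 \<nu>"
  shows "\<forall>\<^sub>F B in at_top. feasible \<I> c a B (\<lambda>I. of_int \<lfloor>B * \<nu> I\<rfloor>)"
proof -
  have adm: "admissible \<I> a \<nu>" by (rule feasible_imp_admissible[OF \<nu>])
  then obtain K where "0 < K" and floor_ge: "\<And>B I. I \<in> \<I> \<Longrightarrow> (B - K) * \<nu> I \<le> of_int \<lfloor>B * \<nu> I\<rfloor>"
    using floor_scaled_ge[of \<I> \<nu>] unfolding admissible_def by auto
  show ?thesis
    using eventually_gt_at_top[of K]
  proof eventually_elim
    case (elim B)
    then have "admissible \<I> a (\<lambda>I. of_int \<lfloor>B * \<nu> I\<rfloor>)"
      by (intro admissible_mono[OF adm, of "B - K"]) (use floor_ge in auto)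
    then show ?case using feasible_floor[OF assms] elim \<open>0 < K\<close> by simp
  qed
qed

subsection \<open>The variance functional\<close>

locale covariance_design =
  fixes \<I> :: "'n::finite set set" and S :: "real^'n^'n"
  assumes S_symmetric: "transpose S = S"
    and S_pos_def: "\<forall>x. x \<noteq> 0 \<longrightarrow> 0 < x \<bullet> (S *v x)"
begin

lemma pos_def_on_S: "pos_def_on S U"
  using S_pos_def unfolding pos_def_on_def by blast

lemma block_inverse_S: "block_inverse S I (embed_sub_inv S I)"
  by (rule block_inverse_embed_sub_inv[OF pos_def_on_S])

lemma embed_sub_inv_zero: "i \<notin> I \<or> j \<notin> I \<Longrightarrow> embed_sub_inv S I $ i $ j = 0"
  by (rule block_inverse_zero[OF block_inverse_S])

lemma embed_sub_inv_symmetric: "embed_sub_inv S I $ j $ i = embed_sub_inv S I $ i $ j"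
proof -
  have "transpose (embed_sub_inv S I) $ i $ j = embed_sub_inv S I $ i $ j"
    by (simp add: block_inverse_symmetric[OF S_symmetric block_inverse_S])
  then show ?thesis by (simp add: transpose_def)
qed

lemma embed_sub_inv_nonneg: "0 \<le> x \<bullet> (embed_sub_inv S I *v x)"
  by (rule block_inverse_nonneg[OF pos_def_on_S block_inverse_S])

lemma embed_sub_inv_pos: "i \<in> I \<Longrightarrow> x $ i \<noteq> 0 \<Longrightarrow> 0 < x \<bullet> (embed_sub_inv S I *v x)"
  by (rule block_inverse_pos[OF pos_def_on_S block_inverse_S])

lemma info_matrix_symmetric: "transpose (info_matrix \<I> S n) = info_matrix \<I> S n"
  by (simp add: vec_eq_iff transpose_def info_matrix_entry embed_sub_inv_symmetric)

lemma info_matrix_zero: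
  assumes "\<forall>I\<in>\<I>. 0 \<le> n I" and "i \<notin> alloc_support \<I> n \<or> j \<notin> alloc_support \<I> n"
  shows "info_matrix \<I> S n $ i $ j = 0"
  unfolding info_matrix_entry
proof (intro sum.neutral ballI)
  fix I assume "I \<in> \<I>"
  then consider "n I = 0" | "i \<notin> I \<or> j \<notin> I"
    using assms unfolding alloc_support_def by force
  then show "n I * embed_sub_inv S I $ i $ j = 0"
    by cases (simp_all add: embed_sub_inv_zero)
qed

lemma info_matrix_nonneg: "\<forall>I\<in>\<I>. 0 \<le> n I \<Longrightarrow> 0 \<le> x \<bullet> (info_matrix \<I> S n *v x)"
  unfolding info_matrix_quadratic_form by (intro sum_nonneg) (simp add: embed_sub_inv_nonneg)

lemma info_matrix_pos_def_on:
  assumes nonneg: "\<forall>I\<in>\<I>. 0 \<le> n I"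
  shows "pos_def_on (info_matrix \<I> S n) (alloc_support \<I> n)"
  unfolding pos_def_on_def
proof (intro allI impI)
  fix x :: "real^'n"
  assume "x \<noteq> 0" and xs: "supported_on (alloc_support \<I> n) x"
  then obtain i where i: "x $ i \<noteq> 0" by (auto simp: vec_eq_iff)
  then obtain I where I: "I \<in> \<I>" "0 < n I" "i \<in> I"
    using xs unfolding supported_on_def alloc_support_def by blast
  show "0 < x \<bullet> (info_matrix \<I> S n *v x)"
    unfolding info_matrix_quadratic_form
    by (rule sum_pos2[OF _ I(1)]) (use I i nonneg embed_sub_inv_pos embed_sub_inv_nonneg in auto)
qed

lemma block_inverse_pinv_info_matrix:
  assumes "\<forall>I\<in>\<I>. 0 \<le> n I"
  shows "block_inverse (info_matrix \<I> S n) (alloc_support \<I> n) (mp_pinv (info_matrix \<I> S n))"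
proof -
  obtain X where X: "block_inverse (info_matrix \<I> S n) (alloc_support \<I> n) X"
    using block_inverse_exists[OF info_matrix_pos_def_on[OF assms]] by blast
  have "mp_pinv (info_matrix \<I> S n) = X"
    by (intro mp_pinv_eqI penrose_inverse_block_inverse[OF info_matrix_symmetric _ X]
        info_matrix_zero[OF assms])
  with X show ?thesis by simp
qed

lemma info_matrix_pinv_solves:
  assumes "admissible \<I> a n"
  shows "info_matrix \<I> S n *v (mp_pinv (info_matrix \<I> S n) *v a) = a"
proof -
  have nonneg: "\<forall>I\<in>\<I>. 0 \<le> n I" and a: "{i. a $ i \<noteq> 0} \<subseteq> alloc_support \<I> n"
    using assms unfolding admissible_def by auto
  have "(info_matrix \<I> S n *v (mp_pinv (info_matrix \<I> S n) *v a)) $ i = a $ i" for i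
  proof (cases "i \<in> alloc_support \<I> n")
    case True
    then show ?thesis
      by (rule block_inverse_right_inverse[OF block_inverse_pinv_info_matrix[OF nonneg]])
  next
    case False
    then show ?thesis
      using a info_matrix_zero[OF nonneg] by (auto simp: matrix_vector_mult_def)
  qed
  then show ?thesis by (simp add: vec_eq_iff)
qed

lemma Var_pos:
  assumes "a \<noteq> 0" and adm: "admissible \<I> a n"
  shows "0 < Var \<I> S a n"
proof -
  obtain i where i: "a $ i \<noteq> 0" using assms(1) by (auto simp: vec_eq_iff)
  have nonneg: "\<forall>I\<in>\<I>. 0 \<le> n I" and "i \<in> alloc_support \<I> n"
    using adm i unfolding admissible_def by auto
  then show ?thesis
    unfolding Var_info_matrix
    using block_inverse_pos[OF info_matrix_pos_def_on block_inverse_pinv_info_matrix] i by blast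
qed

lemma Var_ge_quadratic:
  assumes "admissible \<I> a n"
  shows "2 * (a \<bullet> x) - x \<bullet> (info_matrix \<I> S n *v x) \<le> Var \<I> S a n"
proof -
  let ?M = "info_matrix \<I> S n"
  define y where "y = mp_pinv ?M *v a"
  have My: "?M *v y = a" unfolding y_def by (rule info_matrix_pinv_solves[OF assms])
  have "0 \<le> (x - y) \<bullet> (?M *v (x - y))"
    using assms unfolding admissible_def by (intro info_matrix_nonneg) auto
  also have "\<dots> = x \<bullet> (?M *v x) - x \<bullet> a - y \<bullet> (?M *v x) + y \<bullet> a"
    by (simp add: matrix_vector_mult_diff_distrib inner_diff_left inner_diff_right My)
  also have "y \<bullet> (?M *v x) = a \<bullet> x"
    using symmetric_matrix_inner[OF info_matrix_symmetric] My by metis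
  finally show ?thesis by (simp add: Var_info_matrix y_def inner_commute)
qed

lemma Var_attained:
  assumes "admissible \<I> a n"
  obtains y where "Var \<I> S a n = 2 * (a \<bullet> y) - y \<bullet> (info_matrix \<I> S n *v y)"
proof
  let ?y = "mp_pinv (info_matrix \<I> S n) *v a"
  show "Var \<I> S a n = 2 * (a \<bullet> ?y) - ?y \<bullet> (info_matrix \<I> S n *v ?y)"
    by (simp add: info_matrix_pinv_solves[OF assms] Var_info_matrix inner_commute)
qed

lemma Var_le_scaled:
  assumes m: "admissible \<I> a m" and c: "0 < c" and le: "\<forall>I\<in>\<I>. c * m I \<le> n I"
  shows "Var \<I> S a n \<le> Var \<I> S a m / c"
proof -
  obtain y where y: "Var \<I> S a n = 2 * (a \<bullet> y) - y \<bullet> (info_matrix \<I> S n *v y)"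
    using Var_attained[OF admissible_mono[OF m c le]] .
  have "c * (y \<bullet> (info_matrix \<I> S m *v y)) = (\<Sum>I\<in>\<I>. c * m I * (y \<bullet> (embed_sub_inv S I *v y)))"
    by (simp add: info_matrix_quadratic_form sum_distrib_left ac_simps)
  also have "\<dots> \<le> y \<bullet> (info_matrix \<I> S n *v y)"
    unfolding info_matrix_quadratic_form
    by (intro sum_mono mult_right_mono) (use le embed_sub_inv_nonneg in auto)
  finally have "c * Var \<I> S a n \<le> c * (2 * (a \<bullet> y) - c * (y \<bullet> (info_matrix \<I> S m *v y)))"
    using c y by (intro mult_left_mono) auto
  also have "\<dots> = 2 * (a \<bullet> (c *\<^sub>R y)) - (c *\<^sub>R y) \<bullet> (info_matrix \<I> S m *v (c *\<^sub>R y))"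
    by (simp add: matrix_vector_mult_scaleR algebra_simps)
  also have "\<dots> \<le> Var \<I> S a m" by (rule Var_ge_quadratic[OF m])
  finally show ?thesis using c by (simp add: pos_le_divide_eq mult.commute)
qed

lemma Var_scale:
  assumes n: "admissible \<I> a n" and t: "0 < t"
  shows "Var \<I> S a (\<lambda>I. t * n I) = Var \<I> S a n / t"
proof (rule antisym)
  show "Var \<I> S a (\<lambda>I. t * n I) \<le> Var \<I> S a n / t"
    by (rule Var_le_scaled[OF n t]) simp
  have "admissible \<I> a (\<lambda>I. t * n I)" by (rule admissible_mono[OF n t]) simp
  then have "Var \<I> S a n \<le> Var \<I> S a (\<lambda>I. t * n I) / (1 / t)"
    by (rule Var_le_scaled) (use t in auto)
  then show "Var \<I> S a n / t \<le> Var \<I> S a (\<lambda>I. t * n I)"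
    using t by (simp add: pos_divide_le_eq mult.commute)
qed

lemma optimal_Var_scale:
  assumes \<nu>: "feasible \<I> c a 1 \<nu>" and \<nu>_opt: "\<forall>m. feasible \<I> c a 1 m \<longrightarrow> Var \<I> S a \<nu> \<le> Var \<I> S a m"
    and n: "feasible \<I> c a B n" and n_opt: "\<forall>m. feasible \<I> c a B m \<longrightarrow> Var \<I> S a n \<le> Var \<I> S a m"
    and B: "0 < B"
  shows "B * Var \<I> S a n = Var \<I> S a \<nu>"
proof (rule antisym)
  have "Var \<I> S a n \<le> Var \<I> S a (\<lambda>I. B * \<nu> I)"
    using n_opt feasible_scale[OF \<nu> B] by simp
  also have "\<dots> = Var \<I> S a \<nu> / B"
    by (rule Var_scale[OF feasible_imp_admissible[OF \<nu>] B])
  finally show "B * Var \<I> S a n \<le> Var \<I> S a \<nu>"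
    using B by (simp add: le_divide_eq mult.commute)
  have "Var \<I> S a \<nu> \<le> Var \<I> S a (\<lambda>I. (1 / B) * n I)"
    using \<nu>_opt feasible_scale[OF n, of "1 / B"] B by simp
  also have "\<dots> = B * Var \<I> S a n"
    using Var_scale[OF feasible_imp_admissible[OF n], of "1 / B"] B by simp
  finally show "Var \<I> S a \<nu> \<le> B * Var \<I> S a n" .
qed

lemma scaled_Var_floor_bounds:
  assumes \<nu>: "admissible \<I> a \<nu>" and K: "0 < K" "K < B"
    and floor_ge: "\<forall>I\<in>\<I>. (B - K) * \<nu> I \<le> of_int \<lfloor>B * \<nu> I\<rfloor>"
  shows "Var \<I> S a \<nu> \<le> B * Var \<I> S a (\<lambda>I. of_int \<lfloor>B * \<nu> I\<rfloor>)"
    and "B * Var \<I> S a (\<lambda>I. of_int \<lfloor>B * \<nu> I\<rfloor>) \<le> B * Var \<I> S a \<nu> / (B - K)"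
proof -
  let ?r = "\<lambda>I. real_of_int \<lfloor>B * \<nu> I\<rfloor>"
  have BK: "0 < B - K" using K by simp
  have "Var \<I> S a \<nu> / B = Var \<I> S a (\<lambda>I. B * \<nu> I)"
    using Var_scale[OF \<nu>, of B] K by simp
  also have "\<dots> \<le> Var \<I> S a ?r / 1"
    by (rule Var_le_scaled[OF admissible_mono[OF \<nu> BK floor_ge]])
      (auto simp: of_int_floor_le)
  finally show "Var \<I> S a \<nu> \<le> B * Var \<I> S a ?r"
    using K by (simp add: divide_le_eq mult.commute)
  have "Var \<I> S a ?r \<le> Var \<I> S a \<nu> / (B - K)"
    by (rule Var_le_scaled[OF \<nu> BK floor_ge])
  then show "B * Var \<I> S a ?r \<le> B * Var \<I> S a \<nu> / (B - K)"
    using K by (simp add: mult_left_mono flip: times_divide_eq_right)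
qed

lemma tendsto_scaled_Var_floor:
  assumes \<nu>: "admissible \<I> a \<nu>"
  shows "((\<lambda>B. B * Var \<I> S a (\<lambda>I. of_int \<lfloor>B * \<nu> I\<rfloor>)) \<longlongrightarrow> Var \<I> S a \<nu>) at_top"
proof -
  obtain K where K: "0 < K" and floor_ge: "\<And>B I. I \<in> \<I> \<Longrightarrow> (B - K) * \<nu> I \<le> of_int \<lfloor>B * \<nu> I\<rfloor>"
    using floor_scaled_ge[of \<I> \<nu>] \<nu> unfolding admissible_def by auto
  note bounds = scaled_Var_floor_bounds[OF \<nu> K] floor_ge
  have "((\<lambda>B. B * v / (B - K)) \<longlongrightarrow> v) at_top" for v :: real
    by real_asymp
  then show ?thesis
  proof (rule tendsto_sandwich[OF _ _ tendsto_const, rotated 2])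
    show "\<forall>\<^sub>F B in at_top. Var \<I> S a \<nu> \<le> B * Var \<I> S a (\<lambda>I. of_int \<lfloor>B * \<nu> I\<rfloor>)"
      using eventually_gt_at_top[of K] by (rule eventually_mono) (use bounds in blast)
    show "\<forall>\<^sub>F B in at_top.
        B * Var \<I> S a (\<lambda>I. of_int \<lfloor>B * \<nu> I\<rfloor>) \<le> B * Var \<I> S a \<nu> / (B - K)"
      using eventually_gt_at_top[of K] by (rule eventually_mono) (use bounds in blast)
  qed
qed

end

theorem mainTheorem7:
  fixes \<I> :: "'n::finite set set" and c :: "'n set \<Rightarrow> real"
    and S :: "real^'n^'n" and a :: "real^'n"
    and \<nu> :: "'n set \<Rightarrow> real"
    and nfrac nint :: "real \<Rightarrow> 'n set \<Rightarrow> real"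
  assumes nonempty: "\<forall>I\<in>\<I>. I \<noteq> {}"
    and cost_pos: "\<forall>I\<in>\<I>. c I > 0"
    and S_sym: "transpose S = S"
    and S_pd: "\<forall>x. x \<noteq> 0 \<longrightarrow> x \<bullet> (S *v x) > 0"
    and a_nz: "a \<noteq> 0"
    and a_supp: "{i. a $ i \<noteq> 0} \<subseteq> \<Union>\<I>"
    and nu_opt: "feasible \<I> c a 1 \<nu> \<and>
                 (\<forall>m. feasible \<I> c a 1 m \<longrightarrow> Var \<I> S a \<nu> \<le> Var \<I> S a m)"
    and frac_opt: "\<forall>B>0. feasible \<I> c a B (nfrac B) \<and>
                 (\<forall>m. feasible \<I> c a B m \<longrightarrow> Var \<I> S a (nfrac B) \<le> Var \<I> S a m)"
    and int_opt: "\<forall>\<^sub>F B in at_top. integral_alloc \<I> (nint B) \<and> feasible \<I> c a B (nint B) \<and>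
                 (\<forall>m. integral_alloc \<I> m \<and> feasible \<I> c a B m \<longrightarrow>
                      Var \<I> S a (nint B) \<le> Var \<I> S a m)"
  shows "((\<lambda>B. B * Var \<I> S a (\<lambda>I. of_int \<lfloor>B * \<nu> I\<rfloor>)) \<longlongrightarrow> Var \<I> S a \<nu>) at_top
       \<and> (\<forall>B>0. B * Var \<I> S a (nfrac B) = Var \<I> S a \<nu>)
       \<and> ((\<lambda>B. Var \<I> S a (nfrac B) / Var \<I> S a (nint B)) \<longlongrightarrow> 1) at_top"
proof -
  interpret covariance_design \<I> S using S_sym S_pd by unfold_locales auto
  let ?V = "Var \<I> S a" and ?round = "\<lambda>B I. real_of_int \<lfloor>B * \<nu> I\<rfloor>"
  have c_nonneg: "\<forall>I\<in>\<I>. 0 \<le> c I" using cost_pos by (simp add: less_imp_le)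
  have \<nu>: "admissible \<I> a \<nu>" using nu_opt feasible_imp_admissible by blast
  have round_lim: "((\<lambda>B. B * ?V (?round B)) \<longlongrightarrow> ?V \<nu>) at_top"
    by (rule tendsto_scaled_Var_floor[OF \<nu>])
  have frac_val: "\<forall>B>0. B * ?V (nfrac B) = ?V \<nu>"
    using optimal_Var_scale nu_opt frac_opt by blast
  have ratio_bounds: "\<forall>\<^sub>F B in at_top. ?V \<nu> / (B * ?V (?round B)) \<le> ?V (nfrac B) / ?V (nint B) \<and>
      ?V (nfrac B) / ?V (nint B) \<le> 1"
    using eventually_gt_at_top[of 0] int_opt eventually_feasible_floor[OF c_nonneg conjunct1[OF nu_opt]]
  proof eventually_elim
    case (elim B)
    have "?V (nint B) \<le> ?V (?round B)" using elim by (simp add: integral_alloc_def)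
    moreover have "?V (nfrac B) \<le> ?V (nint B)" using frac_opt elim by blast
    moreover have "0 < ?V (nfrac B)"
      using Var_pos[OF a_nz feasible_imp_admissible] frac_opt elim by blast
    moreover have "?V \<nu> / (B * ?V (?round B)) = ?V (nfrac B) / ?V (?round B)"
    proof -
      have "?V \<nu> = B * ?V (nfrac B)" using frac_val elim(1) by simp
      then show ?thesis using elim(1) by simp
    qed
    ultimately show ?case by (auto intro: frac_le)
  qed
  have lower_lim: "((\<lambda>B. ?V \<nu> / (B * ?V (?round B))) \<longlongrightarrow> 1) at_top"
    using tendsto_divide[OF tendsto_const round_lim, of "?V \<nu>"] Var_pos[OF a_nz \<nu>] by simp
  have "((\<lambda>B. ?V (nfrac B) / ?V (nint B)) \<longlongrightarrow> 1) at_top"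
    by (rule tendsto_sandwich[OF _ _ lower_lim tendsto_const];
        use ratio_bounds in \<open>auto elim: eventually_mono\<close>)
  with round_lim frac_val show ?thesis by blast
qed

end
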